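(* Let $q>1$ and $n>1$ be integers, let $q'\ge 2q-1$ be an integer with $q'>q$, and let $S=(s_i)$ be an $\mathcal{OS}_q(n)$ of period $m$ with ring sequence $[s_0,\ldots,s_{m-1}]$. Let $S'$ be the periodic sequence over $\mathbb{Z}_{q'}$ with ring sequence $[s_0',\ldots,s_{m-1}']$, where for $x\in\mathbb{Z}_q$, $x'$ denotes the residue class in $\mathbb{Z}_{q'}$ of the unique integer in $\{0,1,\ldots,q-1\}$ belonging to the class $x$. Then $S'$ is an $\mathcal{SOS}_{q'}(n)$.
   Context: For a periodic sequence $S=(s_i)$ over $\mathbb{Z}_q$ write $\mathbf{s}_n(i)=(s_i,\ldots,s_{i+n-1})$; for an $n$-tuple $\mathbf{u}=(u_0,\ldots,u_{n-1})$, $\mathbf{u}^R=(u_{n-1},\ldots,u_0)$ and $-\mathbf{u}=(-u_0,\ldots,-u_{n-1})$. A $q$-ary $n$-window sequence of period $m$ is a periodic sequence with $\mathbf{s}_n(i)=\mathbf{s}_n(j)\Rightarrow i\equiv j\pmod m$. An $\mathcal{OS}_q(n)$ is an $n$-window sequence with $\mathbf{s}_n(i)\neq\mathbf{s}_n(j)^R$ for all $i,j$; an $\mathcal{SOS}_q(n)$ is an $\mathcal{OS}_q(n)$ that additionally satisfies $\mathbf{s}_n(i)\neq-\mathbf{s}_n(j)^R$ for all $i,j$. The ring sequence $[a_0,\ldots,a_{m-1}]$ of a sequence of period $m$ is one period, i.e. the sequence is given by $s_{i+tm}=a_i$. *)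

theory Defs
  imports Main
begin

text \<open>A q-ary sequence is represented as a function nat => int whose values are the
canonical representatives in {0..<q} of the residue classes in Z_q.\<close>

definition is_qseq :: "int \<Rightarrow> (nat \<Rightarrow> int) \<Rightarrow> bool" where
  "is_qseq q s \<longleftrightarrow> (\<forall>i. 0 \<le> s i \<and> s i < q)"

definition periodic_seq :: "nat \<Rightarrow> (nat \<Rightarrow> int) \<Rightarrow> bool" where
  "periodic_seq m s \<longleftrightarrow> 0 < m \<and> (\<forall>i. s (i + m) = s i)"

definition window :: "(nat \<Rightarrow> int) \<Rightarrow> nat \<Rightarrow> nat \<Rightarrow> int list" where
  "window s n i = map (\<lambda>k. s (i + k)) [0..<n]"

definition neg_tuple :: "int \<Rightarrow> int list \<Rightarrow> int list" where
  "neg_tuple q u = map (\<lambda>x. (- x) mod q) u"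

definition n_window_seq :: "int \<Rightarrow> nat \<Rightarrow> nat \<Rightarrow> (nat \<Rightarrow> int) \<Rightarrow> bool" where
  "n_window_seq q n m s \<longleftrightarrow> is_qseq q s \<and> periodic_seq m s \<and>
     (\<forall>i j. window s n i = window s n j \<longrightarrow> i mod m = j mod m)"

definition OS :: "int \<Rightarrow> nat \<Rightarrow> nat \<Rightarrow> (nat \<Rightarrow> int) \<Rightarrow> bool" where
  "OS q n m s \<longleftrightarrow> n_window_seq q n m s \<and>
     (\<forall>i j. window s n i \<noteq> rev (window s n j))"

definition SOS :: "int \<Rightarrow> nat \<Rightarrow> nat \<Rightarrow> (nat \<Rightarrow> int) \<Rightarrow> bool" where
  "SOS q n m s \<longleftrightarrow> OS q n m s \<and>
     (\<forall>i j. window s n i \<noteq> neg_tuple q (rev (window s n j)))"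

end

theory Submission
  imports Defs
begin

(* Digits of S lie in {0..q-1}, which is also a set of canonical representatives modulo q',
   so S' is S itself and inherits the OS property. The negation modulo q' of a nonzero digit
   x is q' - x >= q, outside the digit range; hence a window of S' can equal the negated
   reverse of another only if both are zero, and then it equals the plain reverse, which the
   OS property excludes. *)

lemma is_qseq_mono: "is_qseq q s \<Longrightarrow> q \<le> q' \<Longrightarrow> is_qseq q' s"
  unfolding is_qseq_def by (meson less_le_trans)

lemma mod_eq_self_if_is_qseq:
  assumes "is_qseq q s" and "q \<le> q'"
  shows "(\<lambda>i. s i mod q') = s"
  using is_qseq_mono[OF assms] by (intro ext) (simp add: is_qseq_def)

lemma OS_mono: "OS q n m s \<Longrightarrow> q \<le> q' \<Longrightarrow> OS q' n m s"
  unfolding OS_def n_window_seq_def using is_qseq_mono by blast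

lemma set_window_subset: "is_qseq q s \<Longrightarrow> set (window s n i) \<subseteq> {0..<q}"
  unfolding is_qseq_def window_def by auto

lemma neg_mod_eq_digit_imp_zero:
  fixes q q' x y :: int
  assumes x: "0 \<le> x" "x < q" and y: "0 \<le> y" "y < q" and "2 * q - 1 \<le> q'"
    and x_eq: "x = (- y) mod q'"
  shows "y = 0"
proof (rule ccontr)
  assume "y \<noteq> 0"
  have "(- y) mod q' = (q' - y) mod q'" by (metis minus_mod_self1)
  also have "\<dots> = q' - y" using assms \<open>y \<noteq> 0\<close> by (intro mod_pos_pos_trivial) auto
  finally have "x = q' - y" using x_eq by simp
  then show False using assms by linarith
qed

lemma neg_tuple_eq_imp_eq:
  fixes u v :: "int list"
  assumes u: "set u \<subseteq> {0..<q}" and v: "set v \<subseteq> {0..<q}" and "2 * q - 1 \<le> q'"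
    and uv: "u = neg_tuple q' v"
  shows "u = v"
proof (rule nth_equalityI)
  show "length u = length v" using uv by (simp add: neg_tuple_def)
  fix k assume "k < length u"
  then have k: "k < length v" using uv by (simp add: neg_tuple_def)
  have u_k: "u ! k = (- (v ! k)) mod q'" using uv k by (simp add: neg_tuple_def)
  have "u ! k \<in> {0..<q}" "v ! k \<in> {0..<q}" using u v k \<open>k < length u\<close> nth_mem by blast+
  then have "v ! k = 0" using neg_mod_eq_digit_imp_zero[OF _ _ _ _ \<open>2 * q - 1 \<le> q'\<close> u_k] by auto
  then show "u ! k = v ! k" using u_k by simp
qed

lemma SOS_if_OS_digits_below:
  assumes "OS q' n m s" and "is_qseq q s" and "2 * q - 1 \<le> q'"
  shows "SOS q' n m s"
proof -
  have "window s n i \<noteq> neg_tuple q' (rev (window s n j))" for i j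
  proof
    assume "window s n i = neg_tuple q' (rev (window s n j))"
    then have "window s n i = rev (window s n j)"
      using neg_tuple_eq_imp_eq set_window_subset[OF assms(2)] assms(3) by (metis set_rev)
    then show False using assms(1) unfolding OS_def by blast
  qed
  then show ?thesis using assms(1) unfolding SOS_def by blast
qed

theorem theorem3p2:
  fixes q q' :: int and n m :: nat and s :: "nat \<Rightarrow> int"
  assumes "q > 1" and "n > 1" and "q' \<ge> 2 * q - 1" and "q' > q"
    and "OS q n m s"
  shows "SOS q' n m (\<lambda>i. s i mod q')"
proof -
  have digits: "is_qseq q s" using assms(5) unfolding OS_def n_window_seq_def by blast
  have "(\<lambda>i. s i mod q') = s" using mod_eq_self_if_is_qseq[OF digits] assms(4) by simp
  moreover have "OS q' n m s" using OS_mono[OF assms(5)] assms(4) by simp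
  ultimately show ?thesis using SOS_if_OS_digits_below digits assms(3) by simp
qed

end
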